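(* In the two-project discovery model described in the context, suppose the principal's payoff is $1$ if the grand bundle $S=\{1,2\}$ is proposed and approved and $0$ otherwise, and suppose $\mu_1+\mu_2<0$. Then, when discovering only one project, if $\sigma_i>\sigma_j$ ($\{i,j\}=\{1,2\}$) discovering project $i$ is preferred to discovering project $j$ (i.e., the higher-variance project is always preferred). Moreover, discovering both project values is strictly better (yields strictly higher expected payoff) than discovering either project value individually.
   Context: Model. There are two projects $i\in\{1,2\}$. The agent's values $v=(v_1,v_2)\in\mathbb{R}^2$ are drawn from a common prior that is bivariate normal with means $\mu_1,\mu_2$, standard deviations $\sigma_1,\sigma_2>0$ and correlation $\rho\in(0,1)$. Timing: (1) the principal chooses which project values to publicly discover (project 1's value, project 2's value, or both); (2) the chosen values are publicly revealed and the agent forms a posterior by Bayes' rule (so after observing $v_i$, the agent's posterior on $v_j$ is normal with mean $\mu_j+\rho(\sigma_j/\sigma_i)(v_i-\mu_i)$); (3) knowing the revealed values, the principal proposes a subset $S\subseteq\{1,2\}$; (4) the agent approves iff $\sum_{i\in S}\mathbb{E}[v_i\mid\text{revealed information}]\ge 0$. The principal chooses the proposal to maximize her payoff given the revealed information, and compares discovery rules by ex-ante expected payoff. *)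

theory Defs
  imports "HOL-Probability.Probability"
begin

definition binorm_density :: "real \<Rightarrow> real \<Rightarrow> real \<Rightarrow> real \<Rightarrow> real \<Rightarrow> real \<times> real \<Rightarrow> real" where
  "binorm_density m1 m2 s1 s2 r = (\<lambda>(v1, v2).
     let x1 = (v1 - m1) / s1; x2 = (v2 - m2) / s2 in
     exp (- (x1\<^sup>2 - 2 * r * x1 * x2 + x2\<^sup>2) / (2 * (1 - r\<^sup>2)))
       / (2 * pi * s1 * s2 * sqrt (1 - r\<^sup>2)))"

definition prior :: "real \<Rightarrow> real \<Rightarrow> real \<Rightarrow> real \<Rightarrow> real \<Rightarrow> (real \<times> real) measure" where
  "prior m1 m2 s1 s2 r = density lborel (\<lambda>v. ennreal (binorm_density m1 m2 s1 s2 r v))"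

datatype discovery = Disc1 | Disc2 | DiscBoth

text \<open>Posterior mean of each project's value given the publicly revealed information,
as a function of the realized values (Bayes' rule for the bivariate normal).\<close>
definition post_mean :: "real \<Rightarrow> real \<Rightarrow> real \<Rightarrow> real \<Rightarrow> real \<Rightarrow> discovery \<Rightarrow> real \<times> real \<Rightarrow> nat \<Rightarrow> real" where
  "post_mean m1 m2 s1 s2 r d v i = (case d of
      Disc1 \<Rightarrow> (if i = 1 then fst v else m2 + r * (s2 / s1) * (fst v - m1))
    | Disc2 \<Rightarrow> (if i = 2 then snd v else m1 + r * (s1 / s2) * (snd v - m2))
    | DiscBoth \<Rightarrow> (if i = 1 then fst v else snd v))"

definition approves :: "(nat \<Rightarrow> real) \<Rightarrow> nat set \<Rightarrow> bool" where
  "approves e S \<longleftrightarrow> (\<Sum>i\<in>S. e i) \<ge> 0"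

definition grand_payoff :: "nat set \<Rightarrow> bool \<Rightarrow> real" where
  "grand_payoff S approved = (if S = {1, 2} \<and> approved then 1 else 0)"

definition principal_value :: "(nat \<Rightarrow> real) \<Rightarrow> real" where
  "principal_value e = Max ((\<lambda>S. grand_payoff S (approves e S)) ` Pow {1, 2})"

definition expected_payoff :: "real \<Rightarrow> real \<Rightarrow> real \<Rightarrow> real \<Rightarrow> real \<Rightarrow> discovery \<Rightarrow> real" where
  "expected_payoff m1 m2 s1 s2 r d =
     (\<integral>v. principal_value (post_mean m1 m2 s1 s2 r d v) \<partial>(prior m1 m2 s1 s2 r))"

end

theory Submission
  imports Defs
begin

(*
  Whatever is discovered, the grand bundle is approved iff the sum of the two posterior
  means is nonnegative.  Under the bivariate normal prior this sum is normal with mean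
  m1 + m2 and standard deviation s1 + r s2 (discover project 1), s2 + r s1 (discover
  project 2) or sqrt (s1^2 + s2^2 + 2 r s1 s2) (discover both): for the single discoveries
  it is an affine image of one normal marginal, for joint discovery the density of
  (v1, v1 + v2) factors into the N(m1 + m2, s1^2 + s2^2 + 2 r s1 s2) density of the sum
  times a normal conditional density.  The expected payoff is thus P(Z >= -(m1 + m2) / sd)
  for a standard normal Z, which strictly increases with sd because m1 + m2 < 0.  Finally
  (s1 + r s2) - (s2 + r s1) = (1 - r)(s1 - s2) and
  s1^2 + s2^2 + 2 r s1 s2 = (s1 + r s2)^2 + s2^2 (1 - r^2).
*)

lemma normal_density_mult:
  assumes "\<sigma> > 0" "\<tau> > 0"
  shows "normal_density \<mu> \<sigma> x * normal_density \<nu> \<tau> y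
       = exp (- ((x - \<mu>)\<^sup>2 / \<sigma>\<^sup>2 + (y - \<nu>)\<^sup>2 / \<tau>\<^sup>2) / 2) / (2 * pi * \<sigma> * \<tau>)"
proof -
  have sqrt_eq: "sqrt (2 * pi * \<sigma>\<^sup>2) = sqrt (2 * pi) * \<sigma>" "sqrt (2 * pi * \<tau>\<^sup>2) = sqrt (2 * pi) * \<tau>"
    using assms by (simp_all add: real_sqrt_mult)
  have "sqrt (2 * pi) * sqrt (2 * pi) = 2 * pi" by simp
  then show ?thesis
    unfolding normal_density_def sqrt_eq using assms
    by (simp add: exp_add[symmetric] field_simps)
qed

lemma nn_integral_mult_normal_density:
  assumes "\<sigma> > 0" "a \<ge> 0"
  shows "(\<integral>\<^sup>+y. ennreal (a * normal_density \<mu> \<sigma> y) * b \<partial>lborel) = ennreal a * b"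
proof -
  have "(\<integral>\<^sup>+y. ennreal (a * normal_density \<mu> \<sigma> y) * b \<partial>lborel)
      = ennreal a * b * (\<integral>\<^sup>+y. ennreal (normal_density \<mu> \<sigma> y) \<partial>lborel)"
    using assms by (simp add: nn_integral_cmult ennreal_mult mult_ac)
  also have "(\<integral>\<^sup>+y. ennreal (normal_density \<mu> \<sigma> y) \<partial>lborel) = 1"
    using assms(1) by (subst nn_integral_eq_integral) auto
  finally show ?thesis by simp
qed

lemma nn_integral_normal_density_std:
  fixes h :: "real \<Rightarrow> ennreal"
  assumes "\<sigma> > 0" and [measurable]: "h \<in> borel_measurable borel"
  shows "(\<integral>\<^sup>+x. ennreal (normal_density \<mu> \<sigma> x) * h x \<partial>lborel)
       = (\<integral>\<^sup>+z. ennreal (std_normal_density z) * h (\<mu> + \<sigma> * z) \<partial>lborel)"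
proof -
  have "(\<integral>\<^sup>+x. ennreal (normal_density \<mu> \<sigma> x) * h x \<partial>lborel)
      = \<sigma> * (\<integral>\<^sup>+z. ennreal (normal_density \<mu> \<sigma> (\<mu> + \<sigma> * z)) * h (\<mu> + \<sigma> * z) \<partial>lborel)"
    using nn_integral_real_affine[of "\<lambda>x. ennreal (normal_density \<mu> \<sigma> x) * h x" \<sigma> \<mu>] assms
    by simp
  also have "\<dots> = (\<integral>\<^sup>+z. ennreal (\<sigma> * normal_density \<mu> \<sigma> (\<mu> + \<sigma> * z)) * h (\<mu> + \<sigma> * z) \<partial>lborel)"
    using assms by (simp add: nn_integral_cmult ennreal_mult mult.assoc)
  also have "\<dots> = (\<integral>\<^sup>+z. ennreal (std_normal_density z) * h (\<mu> + \<sigma> * z) \<partial>lborel)"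
  proof -
    have "\<sigma> * normal_density \<mu> \<sigma> (\<mu> + \<sigma> * z) = std_normal_density z" for z
      using assms unfolding normal_density_def
      by (simp add: real_sqrt_mult power_mult_distrib field_simps)
    then show ?thesis by simp
  qed
  finally show ?thesis .
qed

definition std_normal_tail :: "real \<Rightarrow> real" where
  "std_normal_tail a = measure std_normal_distribution {a..}"

lemma std_normal_tail_strict_antimono:
  fixes a b :: real
  assumes "a < b"
  shows "std_normal_tail b < std_normal_tail a"
proof -
  interpret N: real_distribution std_normal_distribution
    by (rule real_dist_normal_dist)
  have "{a..<b} \<notin> null_sets std_normal_distribution"
  proof
    assume "{a..<b} \<in> null_sets std_normal_distribution"
    then have "AE x in lborel. x \<in> {a..<b} \<longrightarrow> std_normal_density x = 0"
      by (simp add: null_sets_density_iff)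
    then have "AE x in lborel. x \<notin> {a..<b}"
    proof eventually_elim
      case (elim x)
      then show ?case using normal_density_pos[of 1 0 x] by auto
    qed
    then have "{a..<b} \<in> null_sets lborel"
      by (subst AE_iff_null_sets) auto
    with assms show False by (simp add: null_sets_def)
  qed
  then have "measure std_normal_distribution {a..<b} > 0"
    by (simp add: null_sets_def N.emeasure_eq_measure zero_less_measure_iff)
  moreover have "std_normal_tail a = measure std_normal_distribution {a..<b} + std_normal_tail b"
  proof -
    have "{a..} = {a..<b} \<union> {b..}" using assms by auto
    moreover have "measure std_normal_distribution ({a..<b} \<union> {b..})
        = measure std_normal_distribution {a..<b} + measure std_normal_distribution {b..}"
      by (rule N.finite_measure_Union) auto
    ultimately show ?thesis unfolding std_normal_tail_def by simp
  qed
  ultimately show ?thesis by linarith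
qed

lemma binorm_exponent_split_fst:
  fixes a b s1 s2 r q :: real
  assumes "s1 \<noteq> 0" "s2 \<noteq> 0" "q = 1 - r\<^sup>2" "q \<noteq> 0"
  shows "((a / s1)\<^sup>2 - 2 * r * (a / s1) * (b / s2) + (b / s2)\<^sup>2) / q
       = a\<^sup>2 / s1\<^sup>2 + (b - r * (s2 / s1) * a)\<^sup>2 / (s2\<^sup>2 * q)"
  using assms(1,2,4) by (simp add: field_simps) (use assms(3) in algebra)

lemma binorm_exponent_split_sum:
  fixes a b s1 s2 r q S :: real
  assumes "s1 \<noteq> 0" "s2 \<noteq> 0" "q = 1 - r\<^sup>2" "q \<noteq> 0"
    and "S = s1\<^sup>2 + s2\<^sup>2 + 2 * r * s1 * s2" "S \<noteq> 0"
  shows "((a / s1)\<^sup>2 - 2 * r * (a / s1) * (b / s2) + (b / s2)\<^sup>2) / q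
       = (a + b)\<^sup>2 / S + (a - (s1\<^sup>2 + r * s1 * s2) / S * (a + b))\<^sup>2 / (s1\<^sup>2 * s2\<^sup>2 * q / S)"
  using assms(1,2,4,6) by (simp add: field_simps) (use assms(3,5) in algebra)

lemma binorm_sum_variance_decomp:
  fixes s1 s2 r :: real
  shows "s1\<^sup>2 + s2\<^sup>2 + 2 * r * s1 * s2 = (s1 + r * s2)\<^sup>2 + s2\<^sup>2 * (1 - r\<^sup>2)"
  by (simp add: power2_eq_square algebra_simps)

lemma binorm_sum_variance_pos:
  fixes s1 s2 r :: real
  assumes "s2 \<noteq> 0" "\<bar>r\<bar> < 1"
  shows "0 < s1\<^sup>2 + s2\<^sup>2 + 2 * r * s1 * s2"
  unfolding binorm_sum_variance_decomp using assms
  by (intro add_nonneg_pos) (simp_all add: abs_square_less_1)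

lemma binorm_density_swap:
  "binorm_density m1 m2 s1 s2 r (x, y) = binorm_density m2 m1 s2 s1 r (y, x)"
proof -
  have quadratic_form_swap: "a\<^sup>2 - 2 * r * a * b + b\<^sup>2 = b\<^sup>2 - 2 * r * b * a + a\<^sup>2" for a b :: real
    by (simp add: algebra_simps)
  have normalization_swap: "2 * pi * s1 * s2 * sqrt (1 - r\<^sup>2) = 2 * pi * s2 * s1 * sqrt (1 - r\<^sup>2)"
    by simp
  show ?thesis
    unfolding binorm_density_def Let_def split normalization_swap
    by (subst quadratic_form_swap) (rule refl)
qed

lemma binorm_density_factor_fst:
  fixes s1 s2 r :: real
  assumes "s1 > 0" "s2 > 0" "\<bar>r\<bar> < 1"
  shows "binorm_density m1 m2 s1 s2 r (x, y)
       = normal_density m1 s1 x * normal_density (m2 + r * (s2 / s1) * (x - m1)) (s2 * sqrt (1 - r\<^sup>2)) y"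
proof -
  define q where "q = 1 - r\<^sup>2"
  have q: "q > 0" unfolding q_def using assms(3) by (simp add: abs_square_less_1)
  have halve: "- u / (2 * q) = - (u / q) / 2" for u
    by simp
  have "binorm_density m1 m2 s1 s2 r (x, y)
      = exp (- ((((x - m1) / s1)\<^sup>2 - 2 * r * ((x - m1) / s1) * ((y - m2) / s2) + ((y - m2) / s2)\<^sup>2) / q) / 2)
        / (2 * pi * s1 * (s2 * sqrt q))"
    unfolding binorm_density_def Let_def q_def[symmetric] halve by (simp add: mult.assoc)
  also have "\<dots> = exp (- ((x - m1)\<^sup>2 / s1\<^sup>2 + (y - (m2 + r * (s2 / s1) * (x - m1)))\<^sup>2 / (s2 * sqrt q)\<^sup>2) / 2)
        / (2 * pi * s1 * (s2 * sqrt q))"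
    using binorm_exponent_split_fst[of s1 s2 q r "x - m1" "y - m2"] assms q_def q
    by (simp add: power_mult_distrib diff_diff_eq)
  also have "\<dots> = normal_density m1 s1 x * normal_density (m2 + r * (s2 / s1) * (x - m1)) (s2 * sqrt q) y"
    using assms q by (simp add: normal_density_mult)
  finally show ?thesis unfolding q_def .
qed

lemma binorm_density_factor_sum:
  fixes s1 s2 r :: real
  assumes "s1 > 0" "s2 > 0" "\<bar>r\<bar> < 1"
  defines "S \<equiv> sqrt (s1\<^sup>2 + s2\<^sup>2 + 2 * r * s1 * s2)"
  shows "binorm_density m1 m2 s1 s2 r (x, w - x)
       = normal_density (m1 + m2) S w
         * normal_density (m1 + (s1\<^sup>2 + r * s1 * s2) / S\<^sup>2 * (w - (m1 + m2))) (s1 * s2 * sqrt (1 - r\<^sup>2) / S) x"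
proof -
  define q where "q = 1 - r\<^sup>2"
  have q: "q > 0" unfolding q_def using assms(3) by (simp add: abs_square_less_1)
  have halve: "- u / (2 * q) = - (u / q) / 2" for u
    by simp
  have S2: "S\<^sup>2 = s1\<^sup>2 + s2\<^sup>2 + 2 * r * s1 * s2" "S > 0"
    unfolding S_def using binorm_sum_variance_pos[of s2 r s1] assms(2,3) by auto
  have "binorm_density m1 m2 s1 s2 r (x, w - x)
      = exp (- ((((x - m1) / s1)\<^sup>2 - 2 * r * ((x - m1) / s1) * ((w - x - m2) / s2) + ((w - x - m2) / s2)\<^sup>2) / q) / 2)
        / (2 * pi * S * (s1 * s2 * sqrt q / S))"
    unfolding binorm_density_def Let_def q_def[symmetric] halve using S2(2) by (simp add: mult.assoc)
  also have "\<dots> = exp (- ((w - (m1 + m2))\<^sup>2 / S\<^sup>2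
          + (x - (m1 + (s1\<^sup>2 + r * s1 * s2) / S\<^sup>2 * (w - (m1 + m2))))\<^sup>2 / (s1 * s2 * sqrt q / S)\<^sup>2) / 2)
        / (2 * pi * S * (s1 * s2 * sqrt q / S))"
    using binorm_exponent_split_sum[of s1 s2 q r "S\<^sup>2" "x - m1" "w - x - m2"] assms q_def q S2
    by (simp add: power_mult_distrib power_divide diff_diff_eq add.commute[of m2 m1])
  also have "\<dots> = normal_density (m1 + m2) S w
         * normal_density (m1 + (s1\<^sup>2 + r * s1 * s2) / S\<^sup>2 * (w - (m1 + m2))) (s1 * s2 * sqrt q / S) x"
    using assms q S2 by (simp add: normal_density_mult)
  finally show ?thesis unfolding q_def .
qed

lemma borel_measurable_binorm_density [measurable]:
  "binorm_density m1 m2 s1 s2 r \<in> borel_measurable (borel \<Otimes>\<^sub>M borel)"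
  unfolding binorm_density_def Let_def split_beta' by measurable

lemma nn_integral_prior:
  fixes h :: "real \<times> real \<Rightarrow> ennreal"
  assumes [measurable]: "h \<in> borel_measurable (borel \<Otimes>\<^sub>M borel)"
  shows "(\<integral>\<^sup>+v. h v \<partial>prior m1 m2 s1 s2 r)
       = (\<integral>\<^sup>+x. \<integral>\<^sup>+y. ennreal (binorm_density m1 m2 s1 s2 r (x, y)) * h (x, y) \<partial>lborel \<partial>lborel)"
proof -
  have "(\<integral>\<^sup>+v. h v \<partial>prior m1 m2 s1 s2 r)
      = (\<integral>\<^sup>+v. ennreal (binorm_density m1 m2 s1 s2 r v) * h v \<partial>(lborel \<Otimes>\<^sub>M lborel))"
    unfolding prior_def lborel_prod by (subst nn_integral_density) (auto simp: borel_prod[symmetric])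
  also have "\<dots> = (\<integral>\<^sup>+x. \<integral>\<^sup>+y. ennreal (binorm_density m1 m2 s1 s2 r (x, y)) * h (x, y) \<partial>lborel \<partial>lborel)"
    by (subst lborel.nn_integral_fst[symmetric]) auto
  finally show ?thesis .
qed

lemma prior_nn_integral_fst:
  fixes h :: "real \<Rightarrow> ennreal"
  assumes "s1 > 0" "s2 > 0" "\<bar>r\<bar> < 1" and [measurable]: "h \<in> borel_measurable borel"
  shows "(\<integral>\<^sup>+v. h (fst v) \<partial>prior m1 m2 s1 s2 r) = (\<integral>\<^sup>+x. ennreal (normal_density m1 s1 x) * h x \<partial>lborel)"
proof -
  have "(\<integral>\<^sup>+v. h (fst v) \<partial>prior m1 m2 s1 s2 r)
      = (\<integral>\<^sup>+x. \<integral>\<^sup>+y. ennreal (binorm_density m1 m2 s1 s2 r (x, y)) * h x \<partial>lborel \<partial>lborel)"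
    by (subst nn_integral_prior) auto
  also have "\<dots> = (\<integral>\<^sup>+x. ennreal (normal_density m1 s1 x) * h x \<partial>lborel)"
  proof (rule nn_integral_cong)
    fix x
    have "s2 * sqrt (1 - r\<^sup>2) > 0"
      using assms(2,3) by (simp add: abs_square_less_1)
    then show "(\<integral>\<^sup>+y. ennreal (binorm_density m1 m2 s1 s2 r (x, y)) * h x \<partial>lborel) = ennreal (normal_density m1 s1 x) * h x"
      unfolding binorm_density_factor_fst[OF assms(1-3)]
      by (rule nn_integral_mult_normal_density) simp
  qed
  finally show ?thesis .
qed

lemma prior_nn_integral_snd:
  fixes h :: "real \<Rightarrow> ennreal"
  assumes "s1 > 0" "s2 > 0" "\<bar>r\<bar> < 1" and [measurable]: "h \<in> borel_measurable borel"
  shows "(\<integral>\<^sup>+v. h (snd v) \<partial>prior m1 m2 s1 s2 r) = (\<integral>\<^sup>+y. ennreal (normal_density m2 s2 y) * h y \<partial>lborel)"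
proof -
  have "(\<integral>\<^sup>+v. h (snd v) \<partial>prior m1 m2 s1 s2 r)
      = (\<integral>\<^sup>+x. \<integral>\<^sup>+y. ennreal (binorm_density m1 m2 s1 s2 r (x, y)) * h y \<partial>lborel \<partial>lborel)"
    by (subst nn_integral_prior) auto
  also have "\<dots> = (\<integral>\<^sup>+y. \<integral>\<^sup>+x. ennreal (binorm_density m2 m1 s2 s1 r (y, x)) * h y \<partial>lborel \<partial>lborel)"
    by (subst lborel_pair.Fubini') (simp_all add: binorm_density_swap[of m1 m2 s1 s2])
  also have "\<dots> = (\<integral>\<^sup>+v. h (fst v) \<partial>prior m2 m1 s2 s1 r)"
    by (subst nn_integral_prior) auto
  also have "\<dots> = (\<integral>\<^sup>+y. ennreal (normal_density m2 s2 y) * h y \<partial>lborel)"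
    using assms by (intro prior_nn_integral_fst) auto
  finally show ?thesis .
qed

lemma prior_nn_integral_sum:
  fixes h :: "real \<Rightarrow> ennreal"
  assumes "s1 > 0" "s2 > 0" "\<bar>r\<bar> < 1" and [measurable]: "h \<in> borel_measurable borel"
  defines "S \<equiv> sqrt (s1\<^sup>2 + s2\<^sup>2 + 2 * r * s1 * s2)"
  shows "(\<integral>\<^sup>+v. h (fst v + snd v) \<partial>prior m1 m2 s1 s2 r)
       = (\<integral>\<^sup>+w. ennreal (normal_density (m1 + m2) S w) * h w \<partial>lborel)"
proof -
  have "(\<integral>\<^sup>+v. h (fst v + snd v) \<partial>prior m1 m2 s1 s2 r)
      = (\<integral>\<^sup>+x. \<integral>\<^sup>+y. ennreal (binorm_density m1 m2 s1 s2 r (x, y)) * h (x + y) \<partial>lborel \<partial>lborel)"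
    by (subst nn_integral_prior) auto
  also have "\<dots> = (\<integral>\<^sup>+x. \<integral>\<^sup>+w. ennreal (binorm_density m1 m2 s1 s2 r (x, w - x)) * h w \<partial>lborel \<partial>lborel)"
  proof (rule nn_integral_cong)
    fix x :: real
    show "(\<integral>\<^sup>+y. ennreal (binorm_density m1 m2 s1 s2 r (x, y)) * h (x + y) \<partial>lborel)
        = (\<integral>\<^sup>+w. ennreal (binorm_density m1 m2 s1 s2 r (x, w - x)) * h w \<partial>lborel)"
      using nn_integral_real_affine[of "\<lambda>y. ennreal (binorm_density m1 m2 s1 s2 r (x, y)) * h (x + y)" 1 "- x"]
      by simp
  qed
  also have "\<dots> = (\<integral>\<^sup>+w. \<integral>\<^sup>+x. ennreal (binorm_density m1 m2 s1 s2 r (x, w - x)) * h w \<partial>lborel \<partial>lborel)"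
    by (rule lborel_pair.Fubini'[symmetric]) measurable
  also have "\<dots> = (\<integral>\<^sup>+w. ennreal (normal_density (m1 + m2) S w) * h w \<partial>lborel)"
  proof (rule nn_integral_cong)
    fix w :: real
    have "S > 0"
      unfolding S_def using binorm_sum_variance_pos[of s2 r s1] assms(2,3) by simp
    then have "s1 * s2 * sqrt (1 - r\<^sup>2) / S > 0"
      using assms(1-3) by (simp add: abs_square_less_1)
    then show "(\<integral>\<^sup>+x. ennreal (binorm_density m1 m2 s1 s2 r (x, w - x)) * h w \<partial>lborel)
        = ennreal (normal_density (m1 + m2) S w) * h w"
      unfolding binorm_density_factor_sum[OF assms(1-3)] S_def[symmetric]
      by (rule nn_integral_mult_normal_density) simp
  qed
  finally show ?thesis .
qed

text \<open>The standard deviation of the sum of the two posterior means under a discovery rule;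
  that sum is normally distributed with mean \<open>m1 + m2\<close>.\<close>
definition post_sum_sd :: "real \<Rightarrow> real \<Rightarrow> real \<Rightarrow> discovery \<Rightarrow> real" where
  "post_sum_sd s1 s2 r d = (case d of
      Disc1 \<Rightarrow> s1 + r * s2
    | Disc2 \<Rightarrow> s2 + r * s1
    | DiscBoth \<Rightarrow> sqrt (s1\<^sup>2 + s2\<^sup>2 + 2 * r * s1 * s2))"

lemma prior_nn_integral_post_sum:
  fixes h :: "real \<Rightarrow> ennreal"
  assumes "s1 > 0" "s2 > 0" "\<bar>r\<bar> < 1" and [measurable]: "h \<in> borel_measurable borel"
  shows "(\<integral>\<^sup>+v. h (post_mean m1 m2 s1 s2 r d v 1 + post_mean m1 m2 s1 s2 r d v 2) \<partial>prior m1 m2 s1 s2 r)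
       = (\<integral>\<^sup>+z. ennreal (std_normal_density z) * h (m1 + m2 + post_sum_sd s1 s2 r d * z) \<partial>lborel)"
    (is "?lhs = ?rhs")
proof (cases d)
  case Disc1
  define g where "g x = h (x + (m2 + r * (s2 / s1) * (x - m1)))" for x
  have [measurable]: "g \<in> borel_measurable borel"
    unfolding g_def by measurable
  have g_std: "g (m1 + s1 * z) = h (m1 + m2 + post_sum_sd s1 s2 r d * z)" for z
  proof -
    have "m1 + s1 * z + (m2 + r * (s2 / s1) * (m1 + s1 * z - m1)) = m1 + m2 + (s1 + r * s2) * z"
      using assms(1) by (simp add: field_simps)
    then show ?thesis
      by (simp only: g_def post_sum_sd_def Disc1 discovery.case)
  qed
  have "?lhs = (\<integral>\<^sup>+v. g (fst v) \<partial>prior m1 m2 s1 s2 r)"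
    by (simp add: g_def post_mean_def Disc1)
  also have "\<dots> = (\<integral>\<^sup>+x. ennreal (normal_density m1 s1 x) * g x \<partial>lborel)"
    using assms(1-3) by (rule prior_nn_integral_fst) measurable
  also have "\<dots> = (\<integral>\<^sup>+z. ennreal (std_normal_density z) * g (m1 + s1 * z) \<partial>lborel)"
    using assms(1) by (rule nn_integral_normal_density_std) measurable
  also have "\<dots> = ?rhs"
    using g_std by (intro nn_integral_cong) (simp only:)
  finally show ?thesis .
next
  case Disc2
  define g where "g y = h (m1 + r * (s1 / s2) * (y - m2) + y)" for y
  have [measurable]: "g \<in> borel_measurable borel"
    unfolding g_def by measurable
  have g_std: "g (m2 + s2 * z) = h (m1 + m2 + post_sum_sd s1 s2 r d * z)" for z
  proof -
    have "m1 + r * (s1 / s2) * (m2 + s2 * z - m2) + (m2 + s2 * z) = m1 + m2 + (s2 + r * s1) * z"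
      using assms(2) by (simp add: field_simps)
    then show ?thesis
      by (simp only: g_def post_sum_sd_def Disc2 discovery.case)
  qed
  have "?lhs = (\<integral>\<^sup>+v. g (snd v) \<partial>prior m1 m2 s1 s2 r)"
    by (simp add: g_def post_mean_def Disc2)
  also have "\<dots> = (\<integral>\<^sup>+y. ennreal (normal_density m2 s2 y) * g y \<partial>lborel)"
    using assms(1-3) by (rule prior_nn_integral_snd) measurable
  also have "\<dots> = (\<integral>\<^sup>+z. ennreal (std_normal_density z) * g (m2 + s2 * z) \<partial>lborel)"
    using assms(2) by (rule nn_integral_normal_density_std) measurable
  also have "\<dots> = ?rhs"
    using g_std by (intro nn_integral_cong) (simp only:)
  finally show ?thesis .
next
  case DiscBoth
  define S where "S = post_sum_sd s1 s2 r d"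
  have "S > 0"
    using binorm_sum_variance_pos[of s2 r s1] assms by (simp add: S_def post_sum_sd_def DiscBoth)
  have "?lhs = (\<integral>\<^sup>+v. h (fst v + snd v) \<partial>prior m1 m2 s1 s2 r)"
    by (simp add: post_mean_def DiscBoth)
  also have "\<dots> = (\<integral>\<^sup>+w. ennreal (normal_density (m1 + m2) S w) * h w \<partial>lborel)"
    unfolding S_def post_sum_sd_def DiscBoth discovery.case
    using assms(1-3) by (rule prior_nn_integral_sum) measurable
  also have "\<dots> = ?rhs"
    unfolding S_def[symmetric] using \<open>S > 0\<close> by (rule nn_integral_normal_density_std) measurable
  finally show ?thesis .
qed

lemma principal_value_eq: "principal_value e = indicator {0..} (e 1 + e 2)"
proof -
  have "Pow {1::nat, 2} = {{}, {1}, {2}, {1, 2}}"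
    by (auto simp: Pow_def)
  then show ?thesis
    unfolding principal_value_def grand_payoff_def approves_def
    by (auto simp: insert_commute indicator_def)
qed

lemma expected_payoff_eq_std_normal_tail:
  assumes "s1 > 0" "s2 > 0" "\<bar>r\<bar> < 1" "post_sum_sd s1 s2 r d > 0"
  shows "expected_payoff m1 m2 s1 s2 r d = std_normal_tail (- (m1 + m2) / post_sum_sd s1 s2 r d)"
proof -
  define \<sigma> where "\<sigma> = post_sum_sd s1 s2 r d"
  define t where "t v = post_mean m1 m2 s1 s2 r d v 1 + post_mean m1 m2 s1 s2 r d v 2" for v
  have "t \<in> borel_measurable (borel \<Otimes>\<^sub>M borel)"
    unfolding t_def post_mean_def by (cases d; simp; measurable)
  then have [measurable]: "t \<in> borel_measurable borel"
    by (simp add: borel_prod)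
  have "expected_payoff m1 m2 s1 s2 r d = (\<integral>v. indicator {0..} (t v) \<partial>prior m1 m2 s1 s2 r)"
    unfolding expected_payoff_def principal_value_eq t_def ..
  also have "\<dots> = enn2real (\<integral>\<^sup>+v. indicator {0..} (t v) \<partial>prior m1 m2 s1 s2 r)"
    by (subst integral_eq_nn_integral) (auto simp: prior_def ennreal_indicator)
  also have "(\<integral>\<^sup>+v. indicator {0..} (t v) \<partial>prior m1 m2 s1 s2 r)
      = (\<integral>\<^sup>+z. ennreal (std_normal_density z) * indicator {0..} (m1 + m2 + \<sigma> * z) \<partial>lborel)"
    unfolding t_def \<sigma>_def using assms(1-3) by (rule prior_nn_integral_post_sum) simp
  also have "\<dots> = (\<integral>\<^sup>+z. ennreal (std_normal_density z) * indicator {- (m1 + m2) / \<sigma>..} z \<partial>lborel)"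
  proof -
    have "0 \<le> m1 + m2 + \<sigma> * z \<longleftrightarrow> - (m1 + m2) / \<sigma> \<le> z" for z
      using assms(4) pos_divide_le_eq[of \<sigma> "- (m1 + m2)" z] unfolding \<sigma>_def[symmetric]
      by (auto simp: mult.commute)
    then show ?thesis
      by (simp add: indicator_def)
  qed
  also have "\<dots> = emeasure std_normal_distribution {- (m1 + m2) / \<sigma>..}"
    by (simp add: emeasure_density)
  finally show ?thesis
    unfolding std_normal_tail_def \<sigma>_def measure_def .
qed

lemma post_sum_sd_swap:
  "post_sum_sd s2 s1 r Disc1 = post_sum_sd s1 s2 r Disc2"
  "post_sum_sd s2 s1 r DiscBoth = post_sum_sd s1 s2 r DiscBoth"
  by (simp_all add: post_sum_sd_def ac_simps)

lemma post_sum_sd_Disc1_less_Disc2_iff: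
  fixes s1 s2 r :: real
  assumes "r < 1"
  shows "post_sum_sd s1 s2 r Disc1 < post_sum_sd s1 s2 r Disc2 \<longleftrightarrow> s1 < s2"
proof -
  have "post_sum_sd s1 s2 r Disc2 - post_sum_sd s1 s2 r Disc1 = (1 - r) * (s2 - s1)"
    by (simp add: post_sum_sd_def algebra_simps)
  moreover have "0 < (1 - r) * (s2 - s1) \<longleftrightarrow> s1 < s2"
    using assms by (simp add: zero_less_mult_iff)
  ultimately show ?thesis
    by (metis diff_gt_0_iff_gt)
qed

lemma post_sum_sd_Disc1_less_DiscBoth:
  fixes s1 s2 r :: real
  assumes "s2 \<noteq> 0" "\<bar>r\<bar> < 1"
  shows "post_sum_sd s1 s2 r Disc1 < post_sum_sd s1 s2 r DiscBoth"
proof -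
  have "(s1 + r * s2)\<^sup>2 < (s1 + r * s2)\<^sup>2 + s2\<^sup>2 * (1 - r\<^sup>2)"
    using assms by (simp add: abs_square_less_1)
  then have "\<bar>s1 + r * s2\<bar> < sqrt (s1\<^sup>2 + s2\<^sup>2 + 2 * r * s1 * s2)"
    unfolding binorm_sum_variance_decomp by (simp add: real_less_rsqrt)
  then show ?thesis
    unfolding post_sum_sd_def by simp
qed

lemma post_sum_sd_pos:
  fixes s1 s2 r :: real
  assumes "s1 > 0" "s2 > 0" "0 \<le> r" "r < 1"
  shows "post_sum_sd s1 s2 r d > 0"
proof -
  have "post_sum_sd s1 s2 r Disc1 > 0" "post_sum_sd s1 s2 r Disc2 > 0"
    using assms by (simp_all add: post_sum_sd_def add_pos_nonneg)
  moreover have "post_sum_sd s1 s2 r Disc1 < post_sum_sd s1 s2 r DiscBoth"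
    using assms by (intro post_sum_sd_Disc1_less_DiscBoth) auto
  ultimately show ?thesis
    by (cases d) auto
qed

theorem proposition2:
  fixes m1 m2 s1 s2 r :: real
  assumes "s1 > 0" and "s2 > 0" and "0 < r" and "r < 1"
    and "m1 + m2 < 0"
  shows "(s1 > s2 \<longrightarrow> expected_payoff m1 m2 s1 s2 r Disc1 > expected_payoff m1 m2 s1 s2 r Disc2)
       \<and> (s2 > s1 \<longrightarrow> expected_payoff m1 m2 s1 s2 r Disc2 > expected_payoff m1 m2 s1 s2 r Disc1)
       \<and> expected_payoff m1 m2 s1 s2 r DiscBoth > expected_payoff m1 m2 s1 s2 r Disc1
       \<and> expected_payoff m1 m2 s1 s2 r DiscBoth > expected_payoff m1 m2 s1 s2 r Disc2"
proof -
  have r: "\<bar>r\<bar> < 1"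
    using assms(3,4) by simp
  have payoff_less: "expected_payoff m1 m2 s1 s2 r d < expected_payoff m1 m2 s1 s2 r d'"
    if "post_sum_sd s1 s2 r d < post_sum_sd s1 s2 r d'" for d d'
  proof -
    have pos: "post_sum_sd s1 s2 r d > 0" "post_sum_sd s1 s2 r d' > 0"
      using assms(1-4) by (simp_all add: post_sum_sd_pos)
    then have "- (m1 + m2) / post_sum_sd s1 s2 r d' < - (m1 + m2) / post_sum_sd s1 s2 r d"
      using assms(5) that by (intro divide_strict_left_mono) auto
    then show ?thesis
      using assms(1,2) r pos
      by (simp add: expected_payoff_eq_std_normal_tail std_normal_tail_strict_antimono)
  qed
  have "s2 < s1 \<Longrightarrow> post_sum_sd s1 s2 r Disc2 < post_sum_sd s1 s2 r Disc1"
    using post_sum_sd_Disc1_less_Disc2_iff[of r s2 s1] assms(4) by (simp add: post_sum_sd_swap)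
  moreover have "s1 < s2 \<Longrightarrow> post_sum_sd s1 s2 r Disc1 < post_sum_sd s1 s2 r Disc2"
    using post_sum_sd_Disc1_less_Disc2_iff[of r s1 s2] assms(4) by simp
  moreover have "post_sum_sd s1 s2 r Disc1 < post_sum_sd s1 s2 r DiscBoth"
    using assms(2) r by (simp add: post_sum_sd_Disc1_less_DiscBoth)
  moreover have "post_sum_sd s1 s2 r Disc2 < post_sum_sd s1 s2 r DiscBoth"
    using post_sum_sd_Disc1_less_DiscBoth[of s1 r s2] assms(1) r by (simp add: post_sum_sd_swap)
  ultimately show ?thesis
    using payoff_less by blast
qed

end
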